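(* Let $(L_*,b)$ and $(M_*,b)$ be chain complexes, $i:(L_*,b)\to(M_*,b)$ and $p:(M_*,b)\to(L_*,b)$ chain maps, and $h$ a map of degree $+1$ on $M_*$ with $ip=1+bh+hb$. Let $\delta$ be a small perturbation, put $A=(1-\delta h)^{-1}\delta$, and define $$i_\infty=i+hAi,\quad p_\infty=p+pAh,\quad h_\infty=h+hAh,\quad b_\infty=b+pAi.$$ Let $h'=p h_\infty i$ and $h''=p_\infty h i_\infty$. Then $$pi-1=bh'+h'b-(p i_\infty-1)(p_\infty i-1)$$ and $$p_\infty i_\infty-1=b_\infty h''+h''b_\infty-(p_\infty i-1)(p i_\infty-1).$$
   Context: Complexes are chain complexes of modules over a ring, with differentials of degree $-1$. A perturbation $\delta$ is a graded map $M_*\to M_*$ of the same degree as $b$ such that $(b+\delta)^2=0$. It is called small if $1-\delta h$ is invertible. It is known (homological perturbation lemma, HR version) that for a small perturbation, $(L_*,b_\infty)$ is a complex and that $i_\infty:(L_*,b_\infty)\to(M_*,b+\delta)$ and $p_\infty:(M_*,b+\delta)\to(L_*,b_\infty)$ are chain maps. *)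

theory Defs
  imports Main
begin

text \<open>
  Graded modules over a ring are modelled as families of carrier sets
  M n (n :: int) inside an ambient abelian group 'm, each closed under the
  group operations and under a scalar multiplication s by the ring 'r
  satisfying the module axioms.
\<close>

definition graded_module :: "('r::ring_1 \<Rightarrow> 'm::ab_group_add \<Rightarrow> 'm) \<Rightarrow> (int \<Rightarrow> 'm set) \<Rightarrow> bool" where
  "graded_module s M \<longleftrightarrow>
     (\<forall>n. 0 \<in> M n \<and> (\<forall>x\<in>M n. \<forall>y\<in>M n. x + y \<in> M n) \<and> (\<forall>x\<in>M n. - x \<in> M n)
        \<and> (\<forall>r. \<forall>x\<in>M n. s r x \<in> M n)
        \<and> (\<forall>x\<in>M n. \<forall>y\<in>M n. \<forall>a c. s a (x + y) = s a x + s a y \<and> s (a + c) x = s a x + s c x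
              \<and> s (a * c) x = s a (s c x) \<and> s 1 x = x))"

definition graded_map ::
  "('r::ring_1 \<Rightarrow> 'a::ab_group_add \<Rightarrow> 'a) \<Rightarrow> (int \<Rightarrow> 'a set) \<Rightarrow>
   ('r \<Rightarrow> 'b::ab_group_add \<Rightarrow> 'b) \<Rightarrow> (int \<Rightarrow> 'b set) \<Rightarrow> int \<Rightarrow> (int \<Rightarrow> 'a \<Rightarrow> 'b) \<Rightarrow> bool" where
  "graded_map sM M sN N d f \<longleftrightarrow>
     (\<forall>n. (\<forall>x\<in>M n. f n x \<in> N (n + d))
        \<and> (\<forall>x\<in>M n. \<forall>y\<in>M n. f n (x + y) = f n x + f n y)
        \<and> (\<forall>r. \<forall>x\<in>M n. f n (sM r x) = sN r (f n x)))"

text \<open>Composition g o f, where d is the degree of f.\<close>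
definition gcomp :: "(int \<Rightarrow> 'b \<Rightarrow> 'c) \<Rightarrow> int \<Rightarrow> (int \<Rightarrow> 'a \<Rightarrow> 'b) \<Rightarrow> int \<Rightarrow> 'a \<Rightarrow> 'c" where
  "gcomp g d f = (\<lambda>n x. g (n + d) (f n x))"

definition gadd :: "(int \<Rightarrow> 'a \<Rightarrow> 'b::ab_group_add) \<Rightarrow> (int \<Rightarrow> 'a \<Rightarrow> 'b) \<Rightarrow> int \<Rightarrow> 'a \<Rightarrow> 'b" where
  "gadd f g = (\<lambda>n x. f n x + g n x)"

definition gdiff :: "(int \<Rightarrow> 'a \<Rightarrow> 'b::ab_group_add) \<Rightarrow> (int \<Rightarrow> 'a \<Rightarrow> 'b) \<Rightarrow> int \<Rightarrow> 'a \<Rightarrow> 'b" where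
  "gdiff f g = (\<lambda>n x. f n x - g n x)"

definition gid :: "int \<Rightarrow> 'a \<Rightarrow> 'a" where
  "gid = (\<lambda>n x. x)"

definition gzero :: "int \<Rightarrow> 'a \<Rightarrow> 'b::zero" where
  "gzero = (\<lambda>n x. 0)"

definition geq :: "(int \<Rightarrow> 'a set) \<Rightarrow> (int \<Rightarrow> 'a \<Rightarrow> 'b) \<Rightarrow> (int \<Rightarrow> 'a \<Rightarrow> 'b) \<Rightarrow> bool" where
  "geq M f g \<longleftrightarrow> (\<forall>n. \<forall>x\<in>M n. f n x = g n x)"

definition chain_complex :: "('r::ring_1 \<Rightarrow> 'm::ab_group_add \<Rightarrow> 'm) \<Rightarrow> (int \<Rightarrow> 'm set) \<Rightarrow> (int \<Rightarrow> 'm \<Rightarrow> 'm) \<Rightarrow> bool" where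
  "chain_complex s M b \<longleftrightarrow> graded_module s M \<and> graded_map s M s M (-1) b
      \<and> geq M (gcomp b (-1) b) gzero"

definition chain_map ::
  "('r::ring_1 \<Rightarrow> 'a::ab_group_add \<Rightarrow> 'a) \<Rightarrow> (int \<Rightarrow> 'a set) \<Rightarrow> (int \<Rightarrow> 'a \<Rightarrow> 'a) \<Rightarrow>
   ('r \<Rightarrow> 'b::ab_group_add \<Rightarrow> 'b) \<Rightarrow> (int \<Rightarrow> 'b set) \<Rightarrow> (int \<Rightarrow> 'b \<Rightarrow> 'b) \<Rightarrow> (int \<Rightarrow> 'a \<Rightarrow> 'b) \<Rightarrow> bool" where
  "chain_map sL L bL sM M bM f \<longleftrightarrow> graded_map sL L sM M 0 f
      \<and> geq L (gcomp bM 0 f) (gcomp f (-1) bL)"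


text \<open>The perturbed data. Here g is the inverse of 1 - delta h, so pA g delta = (1 - delta h)^(-1) delta.\<close>
definition pA :: "(int \<Rightarrow> 'm \<Rightarrow> 'm) \<Rightarrow> (int \<Rightarrow> 'm \<Rightarrow> 'm) \<Rightarrow> int \<Rightarrow> 'm \<Rightarrow> 'm" where
  "pA g \<delta> = gcomp g (-1) \<delta>"

definition i_inf :: "(int \<Rightarrow> 'l \<Rightarrow> 'm::ab_group_add) \<Rightarrow> (int \<Rightarrow> 'm \<Rightarrow> 'm) \<Rightarrow> (int \<Rightarrow> 'm \<Rightarrow> 'm) \<Rightarrow> (int \<Rightarrow> 'm \<Rightarrow> 'm) \<Rightarrow> int \<Rightarrow> 'l \<Rightarrow> 'm" where
  "i_inf i h g \<delta> = gadd i (gcomp (gcomp h (-1) (pA g \<delta>)) 0 i)"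

definition p_inf :: "(int \<Rightarrow> 'm \<Rightarrow> 'l::ab_group_add) \<Rightarrow> (int \<Rightarrow> 'm \<Rightarrow> 'm) \<Rightarrow> (int \<Rightarrow> 'm \<Rightarrow> 'm) \<Rightarrow> (int \<Rightarrow> 'm \<Rightarrow> 'm) \<Rightarrow> int \<Rightarrow> 'm \<Rightarrow> 'l" where
  "p_inf p h g \<delta> = gadd p (gcomp (gcomp p (-1) (pA g \<delta>)) 1 h)"

definition h_inf :: "(int \<Rightarrow> 'm::ab_group_add \<Rightarrow> 'm) \<Rightarrow> (int \<Rightarrow> 'm \<Rightarrow> 'm) \<Rightarrow> (int \<Rightarrow> 'm \<Rightarrow> 'm) \<Rightarrow> int \<Rightarrow> 'm \<Rightarrow> 'm" where
  "h_inf h g \<delta> = gadd h (gcomp (gcomp h (-1) (pA g \<delta>)) 1 h)"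

definition b_inf :: "(int \<Rightarrow> 'l::ab_group_add \<Rightarrow> 'l) \<Rightarrow> (int \<Rightarrow> 'm \<Rightarrow> 'l) \<Rightarrow> (int \<Rightarrow> 'l \<Rightarrow> 'm) \<Rightarrow> (int \<Rightarrow> 'm \<Rightarrow> 'm) \<Rightarrow> (int \<Rightarrow> 'm \<Rightarrow> 'm) \<Rightarrow> int \<Rightarrow> 'l \<Rightarrow> 'l" where
  "b_inf bL p i g \<delta> = gadd bL (gcomp (gcomp p (-1) (pA g \<delta>)) 0 i)"

end

theory Submission
  imports Defs
begin

(*
  Put A = (1 - \<delta>h)^-1 \<delta>, so that A = \<delta> + \<delta>hA = \<delta> + Ah\<delta>. Computing (1 - \<delta>h)bA from
  (b + \<delta>)^2 = 0 and ip = 1 + bh + hb yields the basic identity bA + Ab + AipA = 0. Expanding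
  with it shows bh\<^sub>\<infinity> + h\<^sub>\<infinity>b = i\<^sub>\<infinity>p\<^sub>\<infinity> - 1 - Ah - hA, and that i\<^sub>\<infinity> and p\<^sub>\<infinity> intertwine b + \<delta>
  with b\<^sub>\<infinity>. Sandwiching the former between p and i gives the formula for pi - 1. For
  p\<^sub>\<infinity>i\<^sub>\<infinity> - 1, the intertwining turns b\<^sub>\<infinity>h'' + h''b\<^sub>\<infinity> into p\<^sub>\<infinity>(ip - 1 + \<delta>h + h\<delta>)i\<^sub>\<infinity>,
  and p\<^sub>\<infinity>\<delta>h = p\<^sub>\<infinity> - p, h\<delta>i\<^sub>\<infinity> = i\<^sub>\<infinity> - i finish the computation.
*)

lemma additive_diff:
  fixes f :: "'a::ab_group_add \<Rightarrow> 'b::ab_group_add"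
  assumes "\<And>x y. x \<in> A \<Longrightarrow> y \<in> A \<Longrightarrow> f (x + y) = f x + f y"
    and "x - y \<in> A" and "y \<in> A"
  shows "f (x - y) = f x - f y"
  using assms(1)[OF assms(2,3)] by (simp add: eq_diff_eq)

lemma additive_inverse_add:
  fixes f g :: "'a::ab_group_add \<Rightarrow> 'a"
  assumes f_add: "\<And>x y. x \<in> A \<Longrightarrow> y \<in> A \<Longrightarrow> f (x + y) = f x + f y"
    and add_closed: "\<And>x y. x \<in> A \<Longrightarrow> y \<in> A \<Longrightarrow> x + y \<in> A"
    and g_closed: "\<And>x. x \<in> A \<Longrightarrow> g x \<in> A"
    and left_inverse: "\<And>x. x \<in> A \<Longrightarrow> g (f x) = x"
    and right_inverse: "\<And>x. x \<in> A \<Longrightarrow> f (g x) = x"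
    and "x \<in> A" and "y \<in> A"
  shows "g (x + y) = g x + g y"
proof -
  have "g (x + y) = g (f (g x) + f (g y))"
    using \<open>x \<in> A\<close> \<open>y \<in> A\<close> by (simp only: right_inverse)
  also have "\<dots> = g (f (g x + g y))"
    using \<open>x \<in> A\<close> \<open>y \<in> A\<close> by (simp only: f_add g_closed)
  also have "\<dots> = g x + g y"
    using \<open>x \<in> A\<close> \<open>y \<in> A\<close> by (simp only: left_inverse add_closed g_closed)
  finally show ?thesis .
qed

lemma graded_module_zero: "graded_module s M \<Longrightarrow> 0 \<in> M k"
  and graded_module_add: "graded_module s M \<Longrightarrow> x \<in> M k \<Longrightarrow> y \<in> M k \<Longrightarrow> x + y \<in> M k"
  and graded_module_uminus: "graded_module s M \<Longrightarrow> x \<in> M k \<Longrightarrow> - x \<in> M k"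
  by (simp_all add: graded_module_def)

lemma graded_module_diff: "graded_module s M \<Longrightarrow> x \<in> M k \<Longrightarrow> y \<in> M k \<Longrightarrow> x - y \<in> M k"
  using graded_module_add graded_module_uminus by (metis diff_conv_add_uminus)

lemmas graded_module_closed =
  graded_module_zero graded_module_add graded_module_uminus graded_module_diff

(* The target index j is a separate variable constrained by an equation, so that such facts
   still apply as simp rules after simp has normalised the index arithmetic. *)
lemma graded_map_mem: "graded_map sM M sN N d f \<Longrightarrow> x \<in> M k \<Longrightarrow> j = k + d \<Longrightarrow> f k x \<in> N j"
  and graded_map_add: "graded_map sM M sN N d f \<Longrightarrow> x \<in> M k \<Longrightarrow> y \<in> M k \<Longrightarrow> f k (x + y) = f k x + f k y"
  by (simp_all add: graded_map_def)

lemma graded_map_diff: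
  "graded_map sM M sN N d f \<Longrightarrow> graded_module sM M \<Longrightarrow> x \<in> M k \<Longrightarrow> y \<in> M k \<Longrightarrow> f k (x - y) = f k x - f k y"
  by (rule additive_diff[where A = "M k"]) (simp_all add: graded_map_add graded_module_diff)

lemma graded_map_zero: "graded_map sM M sN N d f \<Longrightarrow> graded_module sM M \<Longrightarrow> f k 0 = 0"
  using graded_map_diff[of sM M sN N d f 0 k 0] by (simp add: graded_module_zero)

lemma graded_map_uminus:
  "graded_map sM M sN N d f \<Longrightarrow> graded_module sM M \<Longrightarrow> x \<in> M k \<Longrightarrow> f k (- x) = - f k x"
  using graded_map_diff[of sM M sN N d f 0 k x] by (simp add: graded_module_zero graded_map_zero)

lemmas graded_map_linear = graded_map_add graded_map_diff graded_map_uminus graded_map_zero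

locale small_perturbation =
  fixes sL :: "'r::ring_1 \<Rightarrow> 'l::ab_group_add \<Rightarrow> 'l"
    and sM :: "'r \<Rightarrow> 'm::ab_group_add \<Rightarrow> 'm"
    and L :: "int \<Rightarrow> 'l set" and M :: "int \<Rightarrow> 'm set"
    and bL :: "int \<Rightarrow> 'l \<Rightarrow> 'l" and bM :: "int \<Rightarrow> 'm \<Rightarrow> 'm"
    and i :: "int \<Rightarrow> 'l \<Rightarrow> 'm" and p :: "int \<Rightarrow> 'm \<Rightarrow> 'l"
    and h \<delta> g :: "int \<Rightarrow> 'm \<Rightarrow> 'm"
  assumes complex_L: "chain_complex sL L bL"
    and complex_M: "chain_complex sM M bM"
    and chain_map_i: "chain_map sL L bL sM M bM i"
    and chain_map_p: "chain_map sM M bM sL L bL p"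
    and graded_map_h: "graded_map sM M sM M 1 h"
    and homotopy: "geq M (gcomp i 0 p) (gadd gid (gadd (gcomp bM 1 h) (gcomp h (-1) bM)))"
    and graded_map_\<delta>: "graded_map sM M sM M (-1) \<delta>"
    and perturbation: "geq M (gcomp (gadd bM \<delta>) (-1) (gadd bM \<delta>)) gzero"
    and g_closed: "\<forall>n. \<forall>x\<in>M n. g n x \<in> M n"
    and g_left_inverse: "geq M (gcomp g 0 (gdiff gid (gcomp \<delta> 1 h))) gid"
    and g_right_inverse: "geq M (gcomp (gdiff gid (gcomp \<delta> 1 h)) 0 g) gid"
begin

lemma graded_module_L [simp]: "graded_module sL L"
  and graded_module_M [simp]: "graded_module sM M"
  and graded_map_bL: "graded_map sL L sL L (-1) bL"
  and graded_map_bM: "graded_map sM M sM M (-1) bM"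
  and graded_map_i: "graded_map sL L sM M 0 i"
  and graded_map_p: "graded_map sM M sL L 0 p"
  using complex_L complex_M chain_map_i chain_map_p
  by (simp_all add: chain_complex_def chain_map_def)

lemmas carrier_closed =
  graded_module_closed[OF graded_module_L] graded_module_closed[OF graded_module_M]

lemma g_mem: "x \<in> M k \<Longrightarrow> j = k \<Longrightarrow> g k x \<in> M j"
  using g_closed by simp

lemmas maps_mem =
  graded_map_mem[OF graded_map_bL] graded_map_mem[OF graded_map_bM]
  graded_map_mem[OF graded_map_i] graded_map_mem[OF graded_map_p]
  graded_map_mem[OF graded_map_h] graded_map_mem[OF graded_map_\<delta>] g_mem

lemmas base_maps_linear =
  graded_map_linear[OF graded_map_bL] graded_map_linear[OF graded_map_bM]
  graded_map_linear[OF graded_map_i] graded_map_linear[OF graded_map_p]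
  graded_map_linear[OF graded_map_h] graded_map_linear[OF graded_map_\<delta>]

lemma g_left_inverse_apply: "x \<in> M k \<Longrightarrow> g k (x - \<delta> (k + 1) (h k x)) = x"
  using g_left_inverse by (simp add: geq_def gcomp_def gdiff_def gid_def)

lemma g_right_inverse_apply: "x \<in> M k \<Longrightarrow> g k x - \<delta> (k + 1) (h k (g k x)) = x"
  using g_right_inverse by (simp add: geq_def gcomp_def gdiff_def gid_def)

lemma g_add: "x \<in> M k \<Longrightarrow> y \<in> M k \<Longrightarrow> g k (x + y) = g k x + g k y"
  by (rule additive_inverse_add[where A = "M k" and f = "\<lambda>x. x - \<delta> (k + 1) (h k x)"])
    (simp_all add: g_left_inverse_apply g_right_inverse_apply carrier_closed maps_mem
      base_maps_linear)

lemma g_diff: "x \<in> M k \<Longrightarrow> y \<in> M k \<Longrightarrow> g k (x - y) = g k x - g k y"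
  by (rule additive_diff[where A = "M k"]) (simp_all add: g_add carrier_closed)

lemma g_zero: "g k 0 = 0"
  using g_diff[of 0 k 0] by (simp add: carrier_closed)

lemma g_uminus: "x \<in> M k \<Longrightarrow> g k (- x) = - g k x"
  using g_diff[of 0 k x] by (simp add: carrier_closed g_zero)

lemmas maps_linear = base_maps_linear g_add g_diff g_zero g_uminus

abbreviation A :: "int \<Rightarrow> 'm \<Rightarrow> 'm" where
  "A \<equiv> pA g \<delta>"

lemma A_apply: "A k x = g (k - 1) (\<delta> k x)"
  by (simp add: pA_def gcomp_def)

lemma A_mem: "x \<in> M k \<Longrightarrow> j = k - 1 \<Longrightarrow> A k x \<in> M j"
  by (simp add: A_apply maps_mem)

lemma A_add: "x \<in> M k \<Longrightarrow> y \<in> M k \<Longrightarrow> A k (x + y) = A k x + A k y"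
  and A_diff: "x \<in> M k \<Longrightarrow> y \<in> M k \<Longrightarrow> A k (x - y) = A k x - A k y"
  by (simp_all add: A_apply maps_linear maps_mem)

lemmas maps_simps = carrier_closed maps_mem maps_linear A_mem A_add A_diff

lemma bM_bM: "x \<in> M k \<Longrightarrow> j = k - 1 \<Longrightarrow> bM j (bM k x) = 0"
  using complex_M by (simp add: chain_complex_def geq_def gcomp_def gzero_def)

lemma bM_i: "x \<in> L k \<Longrightarrow> bM k (i k x) = i (k - 1) (bL k x)"
  using chain_map_i by (simp add: chain_map_def geq_def gcomp_def)

lemma bL_p: "x \<in> M k \<Longrightarrow> bL k (p k x) = p (k - 1) (bM k x)"
  using chain_map_p by (simp add: chain_map_def geq_def gcomp_def)

lemma bM_h: "x \<in> M k \<Longrightarrow> j = k + 1 \<Longrightarrow> bM j (h k x) = i k (p k x) - x - h (k - 1) (bM k x)"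
  using homotopy by (simp add: geq_def gcomp_def gadd_def gid_def algebra_simps)

lemma bM_\<delta>:
  assumes x: "x \<in> M k"
  shows "bM (k - 1) (\<delta> k x) = - \<delta> (k - 1) (bM k x) - \<delta> (k - 1) (\<delta> k x)"
proof -
  have "bM (k - 1) (bM k x + \<delta> k x) + \<delta> (k - 1) (bM k x + \<delta> k x) = 0"
    using perturbation x by (simp add: geq_def gcomp_def gadd_def gzero_def)
  with x show ?thesis
    by (simp add: bM_bM eq_diff_eq eq_neg_iff_add_eq_0 algebra_simps maps_simps)
qed

lemma A_expand_left: "y \<in> M k \<Longrightarrow> \<delta> k y + \<delta> k (h (k - 1) (A k y)) = A k y"
  using g_right_inverse_apply[of "\<delta> k y" "k - 1"]
  by (simp add: A_apply diff_eq_eq add.commute maps_simps)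

lemma A_expand_right: "y \<in> M k \<Longrightarrow> \<delta> k y + A k (h (k - 1) (\<delta> k y)) = A k y"
  using g_left_inverse_apply[of "\<delta> k y" "k - 1"]
  by (simp add: A_apply diff_eq_eq add.commute maps_simps)

lemma bM_A:
  assumes y: "y \<in> M k" and j: "j = k - 1"
  shows "bM j (A k y) = - A j (bM k y) - A j (i j (p j (A k y)))"
proof -
  define a where "a = A k y"
  have a: "a \<in> M (k - 1)"
    unfolding a_def using y by (simp add: maps_simps)
  have a_fix: "\<delta> k (y + h (k - 1) a) = a"
    unfolding a_def using A_expand_left[OF y] y by (simp add: maps_simps)
  have "bM (k - 1) a = - \<delta> (k - 1) (bM k (y + h (k - 1) a)) - \<delta> (k - 1) a"
    using bM_\<delta>[of "y + h (k - 1) a" k] y a by (simp add: a_fix maps_simps)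
  also have "bM k (y + h (k - 1) a)
      = bM k y + i (k - 1) (p (k - 1) a) - a - h (k - 2) (bM (k - 1) a)"
    using y a by (simp add: bM_h maps_simps)
  finally have perturbed: "bM (k - 1) a - \<delta> (k - 1) (h (k - 2) (bM (k - 1) a))
      = - \<delta> (k - 1) (bM k y) - \<delta> (k - 1) (i (k - 1) (p (k - 1) a))"
    using y a by (simp add: algebra_simps maps_simps)
  have "bM (k - 1) a = g (k - 2) (bM (k - 1) a - \<delta> (k - 1) (h (k - 2) (bM (k - 1) a)))"
    using g_left_inverse_apply[of "bM (k - 1) a" "k - 2"] a by (simp add: maps_simps)
  also have "\<dots> = - A (k - 1) (bM k y) - A (k - 1) (i (k - 1) (p (k - 1) a))"
    unfolding perturbed using y a by (simp add: A_apply maps_simps)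
  finally show ?thesis
    unfolding j a_def .
qed

lemma i_inf_apply: "i_inf i h g \<delta> k x = i k x + h (k - 1) (A k (i k x))"
  by (simp add: i_inf_def gcomp_def gadd_def)

lemma p_inf_apply: "p_inf p h g \<delta> k y = p k y + p k (A (k + 1) (h k y))"
  by (simp add: p_inf_def gcomp_def gadd_def)

lemma h_inf_apply: "h_inf h g \<delta> k y = h k y + h k (A (k + 1) (h k y))"
  by (simp add: h_inf_def gcomp_def gadd_def)

lemma b_inf_apply: "b_inf bL p i g \<delta> k x = bL k x + p (k - 1) (A k (i k x))"
  by (simp add: b_inf_def gcomp_def gadd_def)

lemma i_inf_mem: "x \<in> L k \<Longrightarrow> i_inf i h g \<delta> k x \<in> M k"
  and h_inf_mem: "y \<in> M k \<Longrightarrow> j = k + 1 \<Longrightarrow> h_inf h g \<delta> k y \<in> M j"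
  by (simp_all add: i_inf_apply p_inf_apply h_inf_apply maps_mem A_mem carrier_closed)

lemma p_inf_add:
    "x \<in> M k \<Longrightarrow> y \<in> M k \<Longrightarrow> p_inf p h g \<delta> k (x + y) = p_inf p h g \<delta> k x + p_inf p h g \<delta> k y"
  and p_inf_diff:
    "x \<in> M k \<Longrightarrow> y \<in> M k \<Longrightarrow> p_inf p h g \<delta> k (x - y) = p_inf p h g \<delta> k x - p_inf p h g \<delta> k y"
  by (simp_all add: p_inf_apply maps_mem A_mem A_add A_diff maps_linear)

lemma i_inf_chain:
  assumes x: "x \<in> L k"
  shows "bM k (i_inf i h g \<delta> k x) + \<delta> k (i_inf i h g \<delta> k x)
    = i_inf i h g \<delta> (k - 1) (b_inf bL p i g \<delta> k x)"
proof -
  define a where "a = A k (i k x)"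
  have a: "a \<in> M (k - 1)"
    unfolding a_def using x by (simp add: maps_simps)
  have a_fix: "\<delta> k (i k x) + \<delta> k (h (k - 1) a) = a"
    unfolding a_def using A_expand_left[of "i k x" k] x by (simp add: maps_simps)
  have "bM k (i_inf i h g \<delta> k x) + \<delta> k (i_inf i h g \<delta> k x)
      = bM k (i k x) + bM k (h (k - 1) a) + (\<delta> k (i k x) + \<delta> k (h (k - 1) a))"
    unfolding i_inf_apply a_def[symmetric] using x a by (simp add: maps_simps)
  also have "\<dots> = i (k - 1) (bL k x) + i (k - 1) (p (k - 1) a) - h (k - 2) (bM (k - 1) a)"
    unfolding a_fix using x a by (simp add: bM_i bM_h)
  also have "\<dots> = i (k - 1) (bL k x) + i (k - 1) (p (k - 1) a)
      + h (k - 2) (A (k - 1) (bM k (i k x)) + A (k - 1) (i (k - 1) (p (k - 1) a)))"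
    unfolding a_def using x by (simp add: bM_A maps_simps)
  also have "\<dots> = i_inf i h g \<delta> (k - 1) (b_inf bL p i g \<delta> k x)"
    unfolding i_inf_apply b_inf_apply a_def using x by (simp add: bM_i maps_simps)
  finally show ?thesis .
qed

lemma p_inf_chain:
  assumes y: "y \<in> M k"
  shows "b_inf bL p i g \<delta> k (p_inf p h g \<delta> k y) = p_inf p h g \<delta> (k - 1) (bM k y + \<delta> k y)"
proof -
  define c where "c = A (k + 1) (h k y)"
  have c: "c \<in> M k"
    unfolding c_def using y by (simp add: maps_simps)
  have "b_inf bL p i g \<delta> k (p_inf p h g \<delta> k y)
      = p (k - 1) (bM k y + bM k c + A k (i k (p k y)) + A k (i k (p k c)))"
    unfolding b_inf_apply p_inf_apply c_def[symmetric] using y c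
    by (simp add: bL_p maps_simps)
  also have "\<dots> = p (k - 1) (bM k y + A k y + A k (h (k - 1) (bM k y)))"
    unfolding c_def using y by (simp add: bM_A bM_h ac_simps maps_simps)
  also have "\<dots> = p (k - 1) (bM k y + \<delta> k y + A k (h (k - 1) (\<delta> k y)) + A k (h (k - 1) (bM k y)))"
    unfolding A_expand_right[OF y, symmetric] by (simp add: ac_simps)
  also have "\<dots> = p_inf p h g \<delta> (k - 1) (bM k y + \<delta> k y)"
    unfolding p_inf_apply using y by (simp add: ac_simps maps_simps)
  finally show ?thesis .
qed

lemma h_inf_homotopy:
  assumes y: "y \<in> M k"
  shows "bM (k + 1) (h_inf h g \<delta> k y) + h_inf h g \<delta> (k - 1) (bM k y)
    = i_inf i h g \<delta> k (p_inf p h g \<delta> k y) - y - A (k + 1) (h k y) - h (k - 1) (A k y)"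
  using y by (simp add: h_inf_apply i_inf_apply p_inf_apply bM_h bM_A maps_simps)

lemma p_inf_\<delta>_h:
  assumes z: "z \<in> M k"
  shows "p_inf p h g \<delta> k (\<delta> (k + 1) (h k z)) = p_inf p h g \<delta> k z - p k z"
proof -
  have "p_inf p h g \<delta> k (\<delta> (k + 1) (h k z))
      = p k (\<delta> (k + 1) (h k z) + A (k + 1) (h k (\<delta> (k + 1) (h k z))))"
    using z by (simp add: p_inf_apply maps_simps)
  also have "\<dots> = p k (A (k + 1) (h k z))"
    using A_expand_right[of "h k z" "k + 1"] z by (simp add: maps_simps)
  finally show ?thesis
    by (simp add: p_inf_apply)
qed

lemma h_\<delta>_i_inf:
  assumes x: "x \<in> L k"
  shows "h (k - 1) (\<delta> k (i_inf i h g \<delta> k x)) = i_inf i h g \<delta> k x - i k x"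
  using A_expand_left[of "i k x" k] x by (simp add: i_inf_apply maps_simps)

lemma p_i_homotopy_formula:
  defines "h' \<equiv> gcomp (gcomp p 1 (h_inf h g \<delta>)) 0 i"
  shows "geq L (gdiff (gcomp p 0 i) gid)
           (gdiff (gadd (gcomp bL 1 h') (gcomp h' (-1) bL))
                  (gcomp (gdiff (gcomp p 0 (i_inf i h g \<delta>)) gid) 0
                         (gdiff (gcomp (p_inf p h g \<delta>) 0 i) gid)))"
    (is "geq L ?lhs ?rhs")
proof (unfold geq_def, intro allI ballI)
  fix k x
  assume x: "x \<in> L k"
  define y where "y = i k x"
  have y: "y \<in> M k"
    unfolding y_def using x by (simp add: maps_simps)
  have "bL (k + 1) (h' k x) + h' (k - 1) (bL k x)
      = p k (bM (k + 1) (h_inf h g \<delta> k y) + h_inf h g \<delta> (k - 1) (bM k y))"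
    unfolding h'_def gcomp_def y_def using x by (simp add: bL_p bM_i h_inf_mem maps_simps)
  also have "\<dots>
      = p k (i_inf i h g \<delta> k (p_inf p h g \<delta> k y) - y - A (k + 1) (h k y) - h (k - 1) (A k y))"
    using h_inf_homotopy[OF y] by simp
  finally have homotopy': "bL (k + 1) (h' k x) + h' (k - 1) (bL k x) = \<dots>" .
  show "?lhs k x = ?rhs k x"
    using x y unfolding gdiff_def gadd_def gcomp_def gid_def
    by (simp add: homotopy' i_inf_apply p_inf_apply y_def maps_simps)
qed

lemma p_inf_i_inf_homotopy_formula:
  defines "h'' \<equiv> gcomp (gcomp (p_inf p h g \<delta>) 1 h) 0 (i_inf i h g \<delta>)"
  shows "geq L (gdiff (gcomp (p_inf p h g \<delta>) 0 (i_inf i h g \<delta>)) gid)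
           (gdiff (gadd (gcomp (b_inf bL p i g \<delta>) 1 h'') (gcomp h'' (-1) (b_inf bL p i g \<delta>)))
                  (gcomp (gdiff (gcomp (p_inf p h g \<delta>) 0 i) gid) 0
                         (gdiff (gcomp p 0 (i_inf i h g \<delta>)) gid)))"
    (is "geq L ?lhs ?rhs")
proof (unfold geq_def, intro allI ballI)
  fix k x
  assume x: "x \<in> L k"
  define z where "z = i_inf i h g \<delta> k x"
  have z: "z \<in> M k"
    unfolding z_def using x by (rule i_inf_mem)
  have "b_inf bL p i g \<delta> (k + 1) (h'' k x) + h'' (k - 1) (b_inf bL p i g \<delta> k x)
      = p_inf p h g \<delta> k (bM (k + 1) (h k z) + \<delta> (k + 1) (h k z))
        + p_inf p h g \<delta> k (h (k - 1) (bM k z + \<delta> k z))"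
    unfolding h''_def gcomp_def z_def using p_inf_chain[of "h k z" "k + 1"] i_inf_chain[OF x] x z
    by (simp add: z_def maps_simps)
  also have "\<dots> = p_inf p h g \<delta> k (i k (p k z)) - p_inf p h g \<delta> k z
        + p_inf p h g \<delta> k (\<delta> (k + 1) (h k z)) + p_inf p h g \<delta> k (h (k - 1) (\<delta> k z))"
    using z by (simp add: bM_h p_inf_add p_inf_diff maps_simps)
  also have "\<dots>
      = p_inf p h g \<delta> k (i k (p k z)) - p k z + p_inf p h g \<delta> k z - p_inf p h g \<delta> k (i k x)"
    unfolding p_inf_\<delta>_h[OF z] using h_\<delta>_i_inf[OF x] x z by (simp add: z_def p_inf_diff maps_simps)
  finally have homotopy'':
    "b_inf bL p i g \<delta> (k + 1) (h'' k x) + h'' (k - 1) (b_inf bL p i g \<delta> k x) = \<dots>" .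
  show "?lhs k x = ?rhs k x"
    using x z unfolding gdiff_def gadd_def gcomp_def gid_def
    by (simp add: homotopy'' z_def[symmetric] p_inf_diff maps_simps)
qed

end

theorem lemma1p9:
  fixes sL :: "'r::ring_1 \<Rightarrow> 'l::ab_group_add \<Rightarrow> 'l"
    and sM :: "'r \<Rightarrow> 'm::ab_group_add \<Rightarrow> 'm"
    and L :: "int \<Rightarrow> 'l set" and M :: "int \<Rightarrow> 'm set"
    and bL :: "int \<Rightarrow> 'l \<Rightarrow> 'l" and bM :: "int \<Rightarrow> 'm \<Rightarrow> 'm"
    and i :: "int \<Rightarrow> 'l \<Rightarrow> 'm" and p :: "int \<Rightarrow> 'm \<Rightarrow> 'l"
    and h \<delta> g :: "int \<Rightarrow> 'm \<Rightarrow> 'm"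
  assumes cL: "chain_complex sL L bL"
    and cM: "chain_complex sM M bM"
    and ci: "chain_map sL L bL sM M bM i"
    and cp: "chain_map sM M bM sL L bL p"
    and hmap: "graded_map sM M sM M 1 h"
    and htpy: "geq M (gcomp i 0 p) (gadd gid (gadd (gcomp bM 1 h) (gcomp h (-1) bM)))"
    and \<delta>map: "graded_map sM M sM M (-1) \<delta>"
    and pert: "geq M (gcomp (gadd bM \<delta>) (-1) (gadd bM \<delta>)) gzero"
    and gdeg: "\<forall>n. \<forall>x\<in>M n. g n x \<in> M n"
    and ginv1: "geq M (gcomp g 0 (gdiff gid (gcomp \<delta> 1 h))) gid"
    and ginv2: "geq M (gcomp (gdiff gid (gcomp \<delta> 1 h)) 0 g) gid"
  defines "h' \<equiv> gcomp (gcomp p 1 (h_inf h g \<delta>)) 0 i"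
    and "h'' \<equiv> gcomp (gcomp (p_inf p h g \<delta>) 1 h) 0 (i_inf i h g \<delta>)"
  shows "geq L (gdiff (gcomp p 0 i) gid)
           (gdiff (gadd (gcomp bL 1 h') (gcomp h' (-1) bL))
                  (gcomp (gdiff (gcomp p 0 (i_inf i h g \<delta>)) gid) 0
                         (gdiff (gcomp (p_inf p h g \<delta>) 0 i) gid)))
     \<and> geq L (gdiff (gcomp (p_inf p h g \<delta>) 0 (i_inf i h g \<delta>)) gid)
           (gdiff (gadd (gcomp (b_inf bL p i g \<delta>) 1 h'') (gcomp h'' (-1) (b_inf bL p i g \<delta>)))
                  (gcomp (gdiff (gcomp (p_inf p h g \<delta>) 0 i) gid) 0
                         (gdiff (gcomp p 0 (i_inf i h g \<delta>)) gid)))"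
proof -
  interpret small_perturbation sL sM L M bL bM i p h \<delta> g
    using cL cM ci cp hmap htpy \<delta>map pert gdeg ginv1 ginv2 by unfold_locales
  show ?thesis
    unfolding h'_def h''_def using p_i_homotopy_formula p_inf_i_inf_homotopy_formula by blast
qed

end
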